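(* Let $S$ be a finite nonempty set of positive integers, $s=\max S$, and $r\ge 1$ an integer. The minimum density of an $r$-identifying code in the distance graph $G(S)$ is achieved by a periodic set with period at most $(6sr)2^{6sr}$.
   Context: The distance graph $G(S)$ has vertex set $\mathbb{Z}$, with $i,j$ adjacent iff $|i-j|\in S$. For a vertex $u$, $B_r(u)$ is the set of vertices at graph distance at most $r$ from $u$ in $G(S)$. A set $A\subseteq\mathbb{Z}$ is an $r$-identifying code if for every pair of distinct vertices $u,v$, the sets $A\cap B_r(u)$ and $A\cap B_r(v)$ are nonempty and distinct. The density of $A$ is $\delta(A)=\limsup_{N\to\infty}\frac{|A\cap[-N,N]|}{2N+1}$. A set $A$ is periodic with period $p$ if $A+p=A$. *)

theory Defs
  imports Complex_Main "HOL-Library.Extended_Real" "HOL-Library.Liminf_Limsup"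
begin

definition dg_adj :: "nat set \<Rightarrow> int \<Rightarrow> int \<Rightarrow> bool" where
  "dg_adj S i j \<longleftrightarrow> nat \<bar>i - j\<bar> \<in> S"

fun dg_ball :: "nat set \<Rightarrow> nat \<Rightarrow> int \<Rightarrow> int set" where
  "dg_ball S 0 u = {u}"
| "dg_ball S (Suc r) u = dg_ball S r u \<union> {w. \<exists>v\<in>dg_ball S r u. dg_adj S v w}"

definition r_identifying_code :: "nat set \<Rightarrow> nat \<Rightarrow> int set \<Rightarrow> bool" where
  "r_identifying_code S r A \<longleftrightarrow>
     (\<forall>u v. u \<noteq> v \<longrightarrow>
        A \<inter> dg_ball S r u \<noteq> {} \<and> A \<inter> dg_ball S r v \<noteq> {} \<and>
        A \<inter> dg_ball S r u \<noteq> A \<inter> dg_ball S r v)"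

definition density :: "int set \<Rightarrow> ereal" where
  "density A = limsup (\<lambda>N::nat. ereal (real (card (A \<inter> {- int N .. int N})) / (2 * real N + 1)))"

definition periodic_with :: "int set \<Rightarrow> nat \<Rightarrow> bool" where
  "periodic_with A p \<longleftrightarrow> (\<lambda>x. x + int p) ` A = A"

end

theory Submission
  imports Defs
begin

text \<open>Put \<open>R = r max S\<close>. Balls of radius \<open>r\<close> have diameter at most \<open>2R\<close>, so \<open>A\<close> is an
  \<open>r\<close>-identifying code iff every window of \<open>4R + 1\<close> consecutive integers of \<open>A\<close> separates its
  centre from the \<open>2R\<close> points to its right. The windows of \<open>A\<close> form a walk in the shift graph on
  the at most \<open>2^(4R+1)\<close> separating windows, and the density of \<open>A\<close> is the mean weight of this
  walk, a window weighing \<open>1\<close> if its first point lies in \<open>A\<close>. Cutting cycles out of a long walk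
  shows that its mean weight is asymptotically at least the minimum mean weight of a closed walk of
  length at most the number of vertices, and unrolling such a minimal closed walk gives a periodic code
  attaining that density.\<close>

lemma dg_adj_translate [simp]: "dg_adj S (v + t) (w + t) = dg_adj S v w"
  by (simp add: dg_adj_def)

lemma dg_ball_translate: "dg_ball S r (u + t) = (\<lambda>x. x + t) ` dg_ball S r u"
proof (induction r)
  case 0
  then show ?case by simp
next
  case (Suc r)
  have "{w. \<exists>v\<in>dg_ball S r (u + t). dg_adj S v w}
        = (\<lambda>x. x + t) ` {w. \<exists>v\<in>dg_ball S r u. dg_adj S v w}"
  proof (intro set_eqI iffI)
    fix w assume "w \<in> {w. \<exists>v\<in>dg_ball S r (u + t). dg_adj S v w}"
    then obtain v where "v \<in> dg_ball S r u" "dg_adj S (v + t) w"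
      using Suc.IH by auto
    then have "dg_adj S v (w - t)"
      using dg_adj_translate[of S v t "w - t"] by simp
    with \<open>v \<in> dg_ball S r u\<close> show "w \<in> (\<lambda>x. x + t) ` {w. \<exists>v\<in>dg_ball S r u. dg_adj S v w}"
      by (intro image_eqI[of _ _ "w - t"]) auto
  qed (use Suc.IH in force)
  then show ?case
    using Suc.IH by (simp add: image_Un)
qed

lemma dg_ball_center: "u \<in> dg_ball S r u"
  by (induction r) auto

lemma dg_ball_dist_le:
  assumes "finite S" "y \<in> dg_ball S r u"
  shows "\<bar>y - u\<bar> \<le> int (r * Max S)"
  using assms(2)
proof (induction r arbitrary: y)
  case 0
  then show ?case by simp
next
  case (Suc r)
  then consider "y \<in> dg_ball S r u" | v where "v \<in> dg_ball S r u" "dg_adj S v y"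
    by auto
  then show ?case
  proof cases
    case 1
    then show ?thesis using Suc.IH by force
  next
    case 2
    then have "nat \<bar>v - y\<bar> \<le> Max S"
      using assms(1) by (simp add: dg_adj_def)
    moreover have "\<bar>v - u\<bar> \<le> int (r * Max S)"
      using Suc.IH 2(1) by blast
    ultimately show ?thesis by simp
  qed
qed

lemma finite_dg_ball: "finite S \<Longrightarrow> finite (dg_ball S r u)"
  by (rule finite_subset[of _ "{u - int (r * Max S) .. u + int (r * Max S)}"])
    (auto dest: dg_ball_dist_le simp: abs_le_iff)

lemma dg_ball_inj:
  assumes "finite S" "dg_ball S r u = dg_ball S r v"
  shows "u = v"
proof -
  have "v \<le> u" if "dg_ball S r u = dg_ball S r v" for u v
  proof -
    define M where "M = Max (dg_ball S r u)"
    have M: "M \<in> dg_ball S r u"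
      unfolding M_def by (rule Max_in[OF finite_dg_ball[OF assms(1)]]) (use dg_ball_center in blast)
    have "dg_ball S r v = (\<lambda>x. x + (v - u)) ` dg_ball S r u"
      using dg_ball_translate[of S r u "v - u"] by simp
    then have "M + (v - u) \<in> dg_ball S r u"
      using M that by auto
    then have "M + (v - u) \<le> M"
      unfolding M_def by (rule Max_ge[OF finite_dg_ball[OF assms(1)]])
    then show ?thesis by simp
  qed
  then show ?thesis using assms(2) by (metis antisym)
qed

lemma r_identifying_code_UNIV: "finite S \<Longrightarrow> r_identifying_code S r UNIV"
  unfolding r_identifying_code_def using dg_ball_center dg_ball_inj by fastforce

text \<open>Balls of centres more than \<open>2 r max S\<close> apart are disjoint, so only nearby pairs need checking.\<close>
lemma r_identifying_code_iff_near:
  assumes "finite S" "R = int (r * Max S)"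
  shows "r_identifying_code S r A \<longleftrightarrow>
    (\<forall>u. A \<inter> dg_ball S r u \<noteq> {}) \<and>
    (\<forall>u d. 1 \<le> d \<and> d \<le> 2 * R \<longrightarrow> A \<inter> dg_ball S r u \<noteq> A \<inter> dg_ball S r (u + d))"
  (is "_ \<longleftrightarrow> ?nonempty \<and> ?near")
proof
  assume code: "r_identifying_code S r A"
  have "A \<inter> dg_ball S r u \<noteq> {}" for u
    using code[unfolded r_identifying_code_def, rule_format, of u "u + 1"] by simp
  moreover have "A \<inter> dg_ball S r u \<noteq> A \<inter> dg_ball S r (u + d)" if "1 \<le> d" for u d
    using code[unfolded r_identifying_code_def, rule_format, of u "u + d"] that by simp
  ultimately show "?nonempty \<and> ?near" by blast
next
  assume near: "?nonempty \<and> ?near"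
  have "A \<inter> dg_ball S r u \<noteq> A \<inter> dg_ball S r v" if "u < v" for u v
  proof (cases "v - u \<le> 2 * R")
    case True
    have "A \<inter> dg_ball S r u \<noteq> A \<inter> dg_ball S r (u + (v - u))"
      using near[THEN conjunct2, rule_format, where u = u and d = "v - u"] that True by simp
    then show ?thesis by simp
  next
    case False
    obtain y where y: "y \<in> A" "y \<in> dg_ball S r u" using near by blast
    have "y \<notin> dg_ball S r v"
    proof
      assume "y \<in> dg_ball S r v"
      then have "\<bar>y - v\<bar> \<le> R" "\<bar>y - u\<bar> \<le> R"
        using dg_ball_dist_le[OF assms(1)] y(2) assms(2) by auto
      with False show False by simp
    qed
    with y show ?thesis by blast
  qed
  then show "r_identifying_code S r A"
    unfolding r_identifying_code_def using near by (metis linorder_neqE)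
qed

definition window :: "int \<Rightarrow> int set \<Rightarrow> int \<Rightarrow> int set" where
  "window K A x = {j \<in> {0..K}. x + j \<in> A}"

text \<open>For \<open>R = r max S\<close>, the balls of radius \<open>r\<close> around the centre \<open>R\<close> of a window \<open>{0..4R}\<close>
  and around the points \<open>R + d\<close>, \<open>d \<le> 2R\<close>, lie entirely inside the window.\<close>
definition separating_window :: "nat set \<Rightarrow> nat \<Rightarrow> int \<Rightarrow> int set \<Rightarrow> bool" where
  "separating_window S r R w \<longleftrightarrow> w \<inter> dg_ball S r R \<noteq> {} \<and>
     (\<forall>d. 1 \<le> d \<and> d \<le> 2 * R \<longrightarrow> w \<inter> dg_ball S r R \<noteq> w \<inter> dg_ball S r (R + d))"

lemma window_subset: "window K A x \<subseteq> {0..K}"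
  by (auto simp: window_def)

lemma inter_dg_ball_eq_window:
  assumes "finite S" "R = int (r * Max S)" "0 \<le> e" "e \<le> 2 * R"
  shows "A \<inter> dg_ball S r (x + R + e) = (\<lambda>j. j + x) ` (window (4 * R) A x \<inter> dg_ball S r (R + e))"
proof -
  have ball: "dg_ball S r (x + R + e) = (\<lambda>j. j + x) ` dg_ball S r (R + e)"
    using dg_ball_translate[of S r "R + e" x] by (simp add: ac_simps)
  have "j \<in> {0..4 * R}" if "j \<in> dg_ball S r (R + e)" for j
    using dg_ball_dist_le[OF assms(1) that] assms by auto
  then show ?thesis
    unfolding ball window_def by (auto simp: ac_simps)
qed

lemma r_identifying_code_iff_windows:
  assumes "finite S" "R = int (r * Max S)"
  shows "r_identifying_code S r A \<longleftrightarrow> (\<forall>x. separating_window S r R (window (4 * R) A x))"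
proof -
  have "0 \<le> R" using assms(2) by simp
  let ?W = "\<lambda>x. window (4 * R) A x"
  have shift: "A \<inter> dg_ball S r (x + R + e) = (\<lambda>j. j + x) ` (?W x \<inter> dg_ball S r (R + e))"
    if "0 \<le> e" "e \<le> 2 * R" for x e
    using inter_dg_ball_eq_window[OF assms that] .
  have all_shift: "(\<forall>u. P u) \<longleftrightarrow> (\<forall>x. P (x + R))" for P
    by (metis diff_add_cancel)
  have "A \<inter> dg_ball S r (x + R) \<noteq> {} \<longleftrightarrow> ?W x \<inter> dg_ball S r R \<noteq> {}" for x
    using shift[of 0 x] \<open>0 \<le> R\<close> by simp
  moreover have "A \<inter> dg_ball S r (x + R) \<noteq> A \<inter> dg_ball S r (x + R + d) \<longleftrightarrow>
        ?W x \<inter> dg_ball S r R \<noteq> ?W x \<inter> dg_ball S r (R + d)"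
    if "1 \<le> d" "d \<le> 2 * R" for x d
  proof -
    have "inj (\<lambda>j::int. j + x)"
      by (simp add: inj_def)
    then show ?thesis
      using shift[of 0 x] shift[of d x] that \<open>0 \<le> R\<close> by (simp add: inj_image_eq_iff)
  qed
  ultimately show ?thesis
    unfolding r_identifying_code_iff_near[OF assms] separating_window_def
    by (subst (1 2) all_shift) auto
qed

definition closed_walk :: "('a \<Rightarrow> 'a \<Rightarrow> bool) \<Rightarrow> 'a set \<Rightarrow> 'a list \<Rightarrow> bool" where
  "closed_walk E V cs \<longleftrightarrow> cs \<noteq> [] \<and> set cs \<subseteq> V \<and> successively E cs \<and> E (last cs) (hd cs)"

text \<open>Pigeonhole on the first \<open>n + 1\<close> entries.\<close>
lemma walk_split_closed_walk:
  assumes "finite V" "card V \<le> n" "set ws \<subseteq> V" "successively E ws" "n < length ws"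
  obtains xs cs zs where "ws = xs @ cs @ zs" "closed_walk E V cs" "length cs \<le> n"
    "successively E (xs @ zs)"
proof -
  define p where "p = take (Suc n) ws"
  have "length p = Suc n"
    using assms(5) by (simp add: p_def)
  moreover have "set p \<subseteq> V"
    using assms(3) unfolding p_def by (meson order_trans set_take_subset)
  then have "card (set p) \<le> n"
    using assms(1,2) by (meson card_mono order_trans)
  ultimately have "\<not> distinct p"
    using distinct_card by fastforce
  then obtain xs y ys us where split: "p = xs @ [y] @ ys @ [y] @ us"
    using not_distinct_decomp by blast
  define cs where "cs = y # ys"
  define zs where "zs = y # us @ drop (Suc n) ws"
  have ws: "ws = xs @ cs @ zs"
    using append_take_drop_id[of "Suc n" ws] unfolding p_def[symmetric] split cs_def zs_def by simp
  have "length cs \<le> n"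
    using \<open>length p = Suc n\<close> unfolding split cs_def by simp
  have prefix: "successively E xs" "successively E (cs @ zs)" "xs = [] \<or> E (last xs) y"
    using assms(4) unfolding ws by (auto simp: successively_append_iff cs_def)
  then have walks: "successively E cs" "successively E zs" "E (last cs) y"
    using successively_append_iff[of E cs zs] by (auto simp: cs_def zs_def)
  have "closed_walk E V cs"
    using walks assms(3) unfolding closed_walk_def ws by (auto simp: cs_def)
  moreover have "successively E (xs @ zs)"
    using prefix walks by (auto simp: successively_append_iff zs_def)
  ultimately show ?thesis
    using that ws \<open>length cs \<le> n\<close> by blast
qed

text \<open>Peel off closed walks until at most \<open>n\<close> vertices remain.\<close>
lemma walk_weight_ge:
  fixes c :: "'a \<Rightarrow> real" and \<mu> :: real
  assumes "finite V" "card V \<le> n" "0 \<le> \<mu>" "\<And>x. 0 \<le> c x"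
    and closed: "\<And>cs. closed_walk E V cs \<Longrightarrow> length cs \<le> n \<Longrightarrow> \<mu> * length cs \<le> sum_list (map c cs)"
  shows "set ws \<subseteq> V \<Longrightarrow> successively E ws \<Longrightarrow> \<mu> * (real (length ws) - n) \<le> sum_list (map c ws)"
proof (induction "length ws" arbitrary: ws rule: less_induct)
  case less
  show ?case
  proof (cases "length ws \<le> n")
    case True
    then have "\<mu> * (real (length ws) - n) \<le> 0"
      using assms(3) by (simp add: mult_nonneg_nonpos)
    also have "0 \<le> sum_list (map c ws)"
      by (rule sum_list_nonneg) (auto intro: assms(4))
    finally show ?thesis .
  next
    case False
    then obtain xs cs zs where ws: "ws = xs @ cs @ zs" and cs: "closed_walk E V cs" "length cs \<le> n"
      and walk: "successively E (xs @ zs)"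
      using walk_split_closed_walk[OF assms(1,2) less.prems] by (metis not_le)
    have "\<mu> * (real (length (xs @ zs)) - n) \<le> sum_list (map c (xs @ zs))"
      using less.hyps[OF _ _ walk] less.prems(1) cs(1) unfolding ws closed_walk_def by auto
    then show ?thesis
      using closed[OF cs] unfolding ws by (simp add: algebra_simps)
  qed
qed

lemma exists_min_mean_closed_walk:
  fixes c :: "'a \<Rightarrow> real"
  assumes "finite V" "card V \<le> n" "\<And>x. 0 \<le> c x" "closed_walk E V cs\<^sub>0" "length cs\<^sub>0 \<le> n"
  obtains cs where "closed_walk E V cs" "length cs \<le> n"
    "\<And>ws. set ws \<subseteq> V \<Longrightarrow> successively E ws \<Longrightarrow>
       sum_list (map c cs) / length cs * (real (length ws) - n) \<le> sum_list (map c ws)"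
proof -
  define C where "C = {cs. closed_walk E V cs \<and> length cs \<le> n}"
  define mean where "mean cs = sum_list (map c cs) / length cs" for cs
  have "finite C"
    by (rule finite_subset[OF _ finite_lists_length_le[OF assms(1), of n]])
      (auto simp: C_def closed_walk_def)
  moreover have "C \<noteq> {}"
    using assms(4,5) by (auto simp: C_def)
  ultimately obtain cs where cs: "cs \<in> C" and min: "\<And>cs'. cs' \<in> C \<Longrightarrow> mean cs \<le> mean cs'"
    using ex_is_arg_min_if_finite[of C mean] by (auto simp: is_arg_min_linorder)
  have "0 \<le> mean cs"
    unfolding mean_def by (intro divide_nonneg_nonneg sum_list_nonneg) (auto intro: assms(3))
  moreover have "mean cs * length cs' \<le> sum_list (map c cs')"
    if "closed_walk E V cs'" "length cs' \<le> n" for cs'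
    using min[of cs'] that by (auto simp: C_def mean_def closed_walk_def field_simps)
  ultimately have "mean cs * (real (length ws) - n) \<le> sum_list (map c ws)"
    if "set ws \<subseteq> V" "successively E ws" for ws
    using walk_weight_ge[where c = c, OF assms(1,2) _ assms(3)] that by blast
  with cs show ?thesis
    using that unfolding C_def mean_def by blast
qed

definition shift_adj :: "int \<Rightarrow> int set \<Rightarrow> int set \<Rightarrow> bool" where
  "shift_adj K w w' \<longleftrightarrow> (\<forall>j. 0 \<le> j \<and> j < K \<longrightarrow> (j + 1 \<in> w \<longleftrightarrow> j \<in> w'))"

lemma shift_adj_window: "shift_adj K (window K A x) (window K A (x + 1))"
  by (auto simp: shift_adj_def window_def ac_simps)

lemma nth_mod_in_set: "xs \<noteq> [] \<Longrightarrow> xs ! nat (x mod int (length xs)) \<in> set xs"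
  by (simp add: nat_less_iff)

lemma closed_walk_nth_mod:
  fixes x :: int
  assumes "closed_walk E V cs"
  defines "p \<equiv> int (length cs)"
  shows "E (cs ! nat (x mod p)) (cs ! nat ((x + 1) mod p))"
proof -
  have "0 < p" using assms(1) by (simp add: p_def closed_walk_def)
  show ?thesis
  proof (cases "x mod p + 1 < p")
    case True
    have "(x + 1) mod p = (x mod p + 1) mod p"
      by (simp add: mod_add_left_eq)
    also have "\<dots> = x mod p + 1"
      using True \<open>0 < p\<close> pos_mod_sign[of p x] by (simp add: mod_pos_pos_trivial)
    finally have "(x + 1) mod p = x mod p + 1" .
    moreover have "Suc (nat (x mod p)) < length cs"
      using True pos_mod_sign[OF \<open>0 < p\<close>, of x] unfolding p_def by linarith
    moreover have "successively E cs"
      using assms(1) by (simp add: closed_walk_def)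
    ultimately show ?thesis
      using pos_mod_sign[OF \<open>0 < p\<close>, of x] by (simp add: successively_nth nat_add_distrib)
  next
    case False
    then have "x mod p = p - 1"
      using pos_mod_bound[OF \<open>0 < p\<close>, of x] by linarith
    have "(x + 1) mod p = (x mod p + 1) mod p"
      by (simp add: mod_add_left_eq)
    then have "(x + 1) mod p = 0"
      using \<open>x mod p = p - 1\<close> by simp
    moreover have "nat (x mod p) = length cs - 1"
      using \<open>x mod p = p - 1\<close> unfolding p_def by linarith
    ultimately show ?thesis
      using assms(1) unfolding closed_walk_def by (auto simp: last_conv_nth hd_conv_nth)
  qed
qed

lemma window_of_closed_shift_walk:
  assumes "closed_walk (shift_adj K) (Pow {0..K}) cs"
  defines "f \<equiv> \<lambda>x. cs ! nat (x mod int (length cs))"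
  shows "window K {x. 0 \<in> f x} x = f x"
proof -
  have "f x \<in> set cs" for x
    using assms(1) unfolding f_def closed_walk_def by (simp add: nth_mod_in_set)
  then have f_sub: "f x \<subseteq> {0..K}" for x
    using assms(1) unfolding closed_walk_def by blast
  have shift: "int j \<le> K \<Longrightarrow> int j \<in> f y \<longleftrightarrow> 0 \<in> f (y + int j)" for j y
  proof (induction j arbitrary: y)
    case 0
    then show ?case by simp
  next
    case (Suc j)
    have "shift_adj K (f y) (f (y + 1))"
      using closed_walk_nth_mod[OF assms(1)] unfolding f_def .
    then have "int j + 1 \<in> f y \<longleftrightarrow> int j \<in> f (y + 1)"
      using Suc.prems unfolding shift_adj_def by simp
    then have "int (Suc j) \<in> f y \<longleftrightarrow> int j \<in> f (y + 1)"
      by (simp add: add.commute)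
    also have "\<dots> \<longleftrightarrow> 0 \<in> f (y + int (Suc j))"
      using Suc by (simp add: ac_simps)
    finally show ?case .
  qed
  have "j \<in> {0..K} \<Longrightarrow> x + j \<in> {x. 0 \<in> f x} \<longleftrightarrow> j \<in> f x" for j
    using shift[of "nat j" x] by simp
  then show ?thesis
    unfolding window_def using f_sub by blast
qed

lemma periodic_with_mod: "0 < p \<Longrightarrow> periodic_with {x. Q (x mod int p)} p"
  unfolding periodic_with_def
  by (rule set_eqI, rule iffI) (auto intro!: image_eqI[where x = "_ - int p"])

lemma tendsto_divide_odd: "((\<lambda>N. c / (2 * real N + 1)) \<longlongrightarrow> 0) sequentially"
proof (rule tendsto_divide_0[OF tendsto_const])
  have "filterlim (\<lambda>N. 1 + 2 * real N) at_top sequentially"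
    by (intro filterlim_tendsto_add_at_top[OF tendsto_const] filterlim_tendsto_pos_mult_at_top[OF tendsto_const]
        filterlim_real_sequentially) simp
  then show "filterlim (\<lambda>N. 2 * real N + 1) at_infinity sequentially"
    by (simp add: add.commute filterlim_at_top_imp_at_infinity)
qed

lemma density_le:
  assumes "\<And>N. real (card (A \<inter> {- int N..int N})) \<le> \<mu> * (2 * real N + 1) + c"
  shows "density A \<le> ereal \<mu>"
proof -
  have "((\<lambda>N. ereal (\<mu> + c / (2 * real N + 1))) \<longlongrightarrow> ereal \<mu>) sequentially"
    using tendsto_add[OF tendsto_const tendsto_divide_odd, of \<mu> c] by (simp add: lim_ereal)
  then have "limsup (\<lambda>N. ereal (\<mu> + c / (2 * real N + 1))) = ereal \<mu>"
    by (rule lim_imp_Limsup[OF trivial_limit_sequentially])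
  moreover have "real (card (A \<inter> {- int N..int N})) / (2 * real N + 1) \<le> \<mu> + c / (2 * real N + 1)" for N
    using assms[of N] by (simp add: pos_divide_le_eq distrib_right)
  then have "density A \<le> limsup (\<lambda>N. ereal (\<mu> + c / (2 * real N + 1)))"
    unfolding density_def by (intro Limsup_mono always_eventually allI) simp
  ultimately show ?thesis by simp
qed

lemma density_ge:
  assumes "\<And>N. \<mu> * (2 * real N + 1) - c \<le> real (card (A \<inter> {- int N..int N}))"
  shows "ereal \<mu> \<le> density A"
proof -
  have "((\<lambda>N. ereal (\<mu> - c / (2 * real N + 1))) \<longlongrightarrow> ereal \<mu>) sequentially"
    using tendsto_diff[OF tendsto_const tendsto_divide_odd, of \<mu> c] by (simp add: lim_ereal)
  then have "limsup (\<lambda>N. ereal (\<mu> - c / (2 * real N + 1))) = ereal \<mu>"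
    by (rule lim_imp_Limsup[OF trivial_limit_sequentially])
  moreover have "\<mu> - c / (2 * real N + 1) \<le> real (card (A \<inter> {- int N..int N})) / (2 * real N + 1)" for N
    using assms[of N] by (simp add: pos_le_divide_eq left_diff_distrib)
  then have "limsup (\<lambda>N. ereal (\<mu> - c / (2 * real N + 1))) \<le> density A"
    unfolding density_def by (intro Limsup_mono always_eventually allI) simp
  ultimately show ?thesis by simp
qed

lemma card_mod_interval_le:
  assumes "0 < p"
  shows "card ({x. Q (x mod int p)} \<inter> {a..<a + int p}) \<le> card {i \<in> {0..<int p}. Q i}"
proof (rule card_inj_on_le)
  show "inj_on (\<lambda>x. x mod int p) ({x. Q (x mod int p)} \<inter> {a..<a + int p})"
  proof (rule inj_onI)
    fix x y
    assume "x \<in> {x. Q (x mod int p)} \<inter> {a..<a + int p}" "y \<in> {x. Q (x mod int p)} \<inter> {a..<a + int p}"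
      and "x mod int p = y mod int p"
    then have "int p dvd x - y" "\<bar>x - y\<bar> < int p"
      by (auto simp: mod_eq_dvd_iff)
    then show "x = y"
      using dvd_imp_le_int[of "x - y" "int p"] by force
  qed
  show "(\<lambda>x. x mod int p) ` ({x. Q (x mod int p)} \<inter> {a..<a + int p}) \<subseteq> {i \<in> {0..<int p}. Q i}"
    using assms by auto
qed (rule finite_subset[of _ "{0..<int p}"], auto)

lemma card_mod_le:
  assumes "0 < p"
  shows "card ({x. Q (x mod int p)} \<inter> {- int N..int N}) \<le> ((2 * N + 1) div p + 1) * card {i \<in> {0..<int p}. Q i}"
proof -
  define A where "A = {x. Q (x mod int p)}"
  define q where "q = (2 * N + 1) div p + 1"
  define I where "I k = {- int N + int k * int p ..< - int N + int k * int p + int p}" for k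
  have "x \<in> (\<Union>k<q. I k)" if x: "x \<in> {- int N..int N}" for x
  proof -
    define k where "k = nat ((x + int N) div int p)"
    have "0 \<le> (x + int N) div int p"
      using x assms by (simp add: pos_imp_zdiv_nonneg_iff)
    then have k: "int k = (x + int N) div int p"
      by (simp add: k_def)
    have "(x + int N) div int p \<le> int (2 * N + 1) div int p"
      using x assms by (intro zdiv_mono1) auto
    moreover have "int ((2 * N + 1) div p) = int (2 * N + 1) div int p"
      by (simp only: of_nat_div)
    ultimately have "k < q"
      using k unfolding q_def by linarith
    moreover have "x \<in> I k"
      unfolding I_def k using assms
      by (simp add: minus_mod_eq_mult_div[symmetric] pos_mod_bound algebra_simps)
    ultimately show ?thesis by blast
  qed
  then have "card (A \<inter> {- int N..int N}) \<le> card (\<Union>k<q. A \<inter> I k)"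
    by (intro card_mono) (auto simp: I_def)
  also have "\<dots> \<le> (\<Sum>k<q. card (A \<inter> I k))"
    by (rule card_UN_le) simp
  also have "\<dots> \<le> (\<Sum>k<q. card {i \<in> {0..<int p}. Q i})"
    unfolding A_def I_def by (intro sum_mono card_mod_interval_le assms)
  finally show ?thesis
    by (simp add: A_def q_def)
qed

lemma density_mod_le:
  assumes "0 < p"
  shows "density {x. Q (x mod int p)} \<le> ereal (card {i \<in> {0..<int p}. Q i} / p)"
proof (rule density_le)
  fix N
  let ?c = "real (card {i \<in> {0..<int p}. Q i})"
  have "real (card ({x. Q (x mod int p)} \<inter> {- int N..int N})) \<le> real ((2 * N + 1) div p + 1) * ?c"
    unfolding of_nat_mult[symmetric] of_nat_le_iff by (rule card_mod_le[OF assms])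
  also have "\<dots> \<le> (real (2 * N + 1) / p + 1) * ?c"
    using of_nat_div_le_of_nat[of "2 * N + 1" p] by (intro mult_right_mono) simp_all
  also have "\<dots> = ?c / p * (2 * real N + 1) + ?c"
    by (simp add: field_simps)
  finally show "real (card ({x. Q (x mod int p)} \<inter> {- int N..int N})) \<le> ?c / p * (2 * real N + 1) + ?c" .
qed

lemma successively_shift_adj_windows:
  "successively (shift_adj K) (map (\<lambda>t. window K A (a + int t)) [0..<L])"
proof (unfold successively_conv_nth, intro allI impI)
  fix i
  assume "Suc i < length (map (\<lambda>t. window K A (a + int t)) [0..<L])"
  moreover have "window K A (a + int (Suc i)) = window K A (a + int i + 1)"
    by (simp add: ac_simps)
  ultimately show "shift_adj K (map (\<lambda>t. window K A (a + int t)) [0..<L] ! i)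
      (map (\<lambda>t. window K A (a + int t)) [0..<L] ! Suc i)"
    using shift_adj_window[of K A "a + int i"] by simp
qed

lemma card_eq_sum_windows:
  assumes "0 \<le> K"
  shows "real (card (A \<inter> {a..<a + int L}))
    = sum_list (map (\<lambda>w. of_bool (0 \<in> w)) (map (\<lambda>t. window K A (a + int t)) [0..<L]))"
proof -
  have "A \<inter> {a..<a + int L} = (\<lambda>t. a + int t) ` ({..<L} \<inter> {t. a + int t \<in> A})"
  proof (rule set_eqI, rule iffI)
    fix x assume "x \<in> A \<inter> {a..<a + int L}"
    then show "x \<in> (\<lambda>t. a + int t) ` ({..<L} \<inter> {t. a + int t \<in> A})"
      by (intro image_eqI[of _ _ "nat (x - a)"]) auto
  qed auto
  then have "card (A \<inter> {a..<a + int L}) = card ({..<L} \<inter> {t. a + int t \<in> A})"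
    by (simp add: card_image inj_on_def)
  also have "real \<dots> = (\<Sum>t<L. of_bool (a + int t \<in> A))"
    by simp
  also have "\<dots> = sum_list (map (\<lambda>w. of_bool (0 \<in> w)) (map (\<lambda>t. window K A (a + int t)) [0..<L]))"
    using assms by (simp add: sum_list_sum_nth lessThan_atLeast0 window_def)
  finally show ?thesis .
qed

lemma density_ge_of_window_walks:
  fixes \<mu> :: real
  assumes "0 \<le> K" "\<And>x. window K B x \<in> V"
    and walks: "\<And>ws. set ws \<subseteq> V \<Longrightarrow> successively (shift_adj K) ws \<Longrightarrow>
      \<mu> * (real (length ws) - n) \<le> sum_list (map (\<lambda>w. of_bool (0 \<in> w)) ws)"
  shows "ereal \<mu> \<le> density B"
proof (rule density_ge)
  fix N
  let ?ws = "map (\<lambda>t. window K B (- int N + int t)) [0..<2 * N + 1]"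
  have "{- int N..int N} = {- int N..<- int N + int (2 * N + 1)}"
    by auto
  then have "real (card (B \<inter> {- int N..int N})) = sum_list (map (\<lambda>w. of_bool (0 \<in> w)) ?ws)"
    using card_eq_sum_windows[OF assms(1)] by presburger
  moreover have "\<mu> * (real (length ?ws) - n) \<le> sum_list (map (\<lambda>w. of_bool (0 \<in> w)) ?ws)"
    using assms(2) by (intro walks successively_shift_adj_windows) auto
  ultimately show "\<mu> * (2 * real N + 1) - \<mu> * n \<le> real (card (B \<inter> {- int N..int N}))"
    by (simp add: algebra_simps)
qed

lemma card_nth_eq_sum_list:
  "real (card {i \<in> {0..<int (length xs)}. P (xs ! nat i)}) = sum_list (map (\<lambda>x. of_bool (P x)) xs)"
proof -
  have "{i \<in> {0..<int (length xs)}. P (xs ! nat i)} = int ` ({..<length xs} \<inter> {i. P (xs ! i)})"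
  proof (rule set_eqI, rule iffI)
    fix i assume "i \<in> {i \<in> {0..<int (length xs)}. P (xs ! nat i)}"
    then show "i \<in> int ` ({..<length xs} \<inter> {i. P (xs ! i)})"
      by (intro image_eqI[of _ _ "nat i"]) auto
  qed auto
  then have "card {i \<in> {0..<int (length xs)}. P (xs ! nat i)} = card ({..<length xs} \<inter> {i. P (xs ! i)})"
    by (simp add: card_image)
  then show ?thesis
    by (simp add: sum_list_sum_nth lessThan_atLeast0)
qed

lemma card_le_of_subset_Pow: "V \<subseteq> Pow {0..int k} \<Longrightarrow> card V \<le> 2 ^ (k + 1)"
  using card_mono[of "Pow {0..int k}" V] by (simp add: card_Pow nat_add_distrib)

lemma periodic_min_density_windows:
  assumes "0 \<le> K" "V \<subseteq> Pow {0..K}" "card V \<le> n"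
    and "closed_walk (shift_adj K) V cs\<^sub>0" "length cs\<^sub>0 \<le> n"
  obtains P p where "0 < p" "p \<le> n" "periodic_with P p" "\<And>x. window K P x \<in> V"
    "\<And>B. (\<And>x. window K B x \<in> V) \<Longrightarrow> density P \<le> density B"
proof -
  have "finite V"
    using assms(2) by (rule finite_subset) simp
  obtain cs where cs: "closed_walk (shift_adj K) V cs" "length cs \<le> n"
    and walks: "\<And>ws. set ws \<subseteq> V \<Longrightarrow> successively (shift_adj K) ws \<Longrightarrow>
      sum_list (map (\<lambda>w. of_bool (0 \<in> w)) cs) / length cs * (real (length ws) - n)
        \<le> sum_list (map (\<lambda>w. of_bool (0 \<in> w)) ws)"
    using exists_min_mean_closed_walk[OF \<open>finite V\<close> assms(3) _ assms(4,5), of "\<lambda>w. of_bool (0 \<in> w)"]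
    by auto
  define p where "p = length cs"
  define f where "f x = cs ! nat (x mod int p)" for x
  define P where "P = {x. 0 \<in> f x}"
  have "0 < p"
    using cs(1) by (simp add: p_def closed_walk_def)
  have "closed_walk (shift_adj K) (Pow {0..K}) cs"
    using cs(1) assms(2) by (auto simp: closed_walk_def)
  then have window_P: "window K P x = f x" for x
    unfolding P_def f_def p_def by (rule window_of_closed_shift_walk)
  have "f x \<in> set cs" for x
    using cs(1) unfolding f_def p_def closed_walk_def by (simp add: nth_mod_in_set)
  then have windows: "window K P x \<in> V" for x
    using cs(1) window_P by (auto simp: closed_walk_def)
  have "periodic_with P p"
    using periodic_with_mod[OF \<open>0 < p\<close>, of "\<lambda>i. 0 \<in> cs ! nat i"] by (simp add: P_def f_def)
  moreover have "density P \<le> density B" if "\<And>x. window K B x \<in> V" for B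
  proof -
    have "density P \<le> ereal (sum_list (map (\<lambda>w. of_bool (0 \<in> w)) cs) / p)"
      using density_mod_le[OF \<open>0 < p\<close>, of "\<lambda>i. 0 \<in> cs ! nat i"]
      unfolding P_def f_def p_def card_nth_eq_sum_list by simp
    also have "\<dots> \<le> density B"
      using density_ge_of_window_walks[OF assms(1) that walks] unfolding p_def .
    finally show ?thesis .
  qed
  ultimately show ?thesis
    using that[OF \<open>0 < p\<close> _ _ windows] cs(2) unfolding p_def by blast
qed

theorem corollary6:
  fixes S :: "nat set" and r :: nat
  assumes "finite S" and "S \<noteq> {}" and "\<forall>x\<in>S. x > 0" and "r \<ge> 1"
  shows "\<exists>A p. p > 0 \<and> p \<le> (6 * Max S * r) * 2 ^ (6 * Max S * r) \<and> periodic_with A p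
           \<and> r_identifying_code S r A
           \<and> (\<forall>B. r_identifying_code S r B \<longrightarrow> density A \<le> density B)"
proof -
  define m where "m = r * Max S"
  define K where "K = int (4 * m)"
  define V where "V = {w \<in> Pow {0..K}. separating_window S r (int m) w}"
  have code_iff: "r_identifying_code S r A \<longleftrightarrow> (\<forall>x. window K A x \<in> V)" for A
    using r_identifying_code_iff_windows[OF assms(1), of "int m" r A] window_subset[of K A]
    unfolding V_def K_def m_def by auto
  have "window K UNIV 0 = {0..K}"
    by (auto simp: window_def)
  then have "{0..K} \<in> V"
    using code_iff[of UNIV] r_identifying_code_UNIV[OF assms(1)] by metis
  then have walk: "closed_walk (shift_adj K) V [{0..K}]"
    by (auto simp: closed_walk_def shift_adj_def)
  have V_Pow: "V \<subseteq> Pow {0..K}"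
    by (auto simp: V_def)
  then have card_V: "card V \<le> 2 ^ (4 * m + 1)"
    unfolding K_def by (rule card_le_of_subset_Pow)
  obtain P p where P: "0 < p" "p \<le> 2 ^ (4 * m + 1)" "periodic_with P p" "\<And>x. window K P x \<in> V"
    "\<And>B. (\<And>x. window K B x \<in> V) \<Longrightarrow> density P \<le> density B"
    by (rule periodic_min_density_windows[OF _ V_Pow card_V walk]) (auto simp: K_def)
  have "1 \<le> m"
    using assms Max_in[OF assms(1,2)] unfolding m_def by (simp add: Suc_le_eq)
  then have "(2::nat) ^ (4 * m + 1) \<le> 6 * m * 2 ^ (6 * m)"
    using power_increasing[of "4 * m + 1" "6 * m" "2::nat"] by (simp add: order_trans)
  with P show ?thesis
    unfolding code_iff m_def by (intro exI[of _ P] exI[of _ p]) (auto simp: ac_simps)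
qed

end
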